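(* Suppose there exists a global Lyapunov function for the auxiliary flow $\Phi$, and suppose $f$ satisfies at least one of the following conditions: (a-1) for every set $B$ closed and bounded in $D$, $f|_B$ is proper; (a-2) $f$ is a local $C^1$ diffeomorphism and $\sup_{x\in B}\|f'(x)^{-1}\|<+\infty$ for every $B$ closed and bounded in $D$; (b) for every $B$ closed and bounded in $D$ and every $x\in B$, the connected components of $f^{-1}([f(x_0);f(x)])\cap B$ are compact ($[f(x_0);f(x)]$ being the line segment in $Y$); (c) for every $B$ closed and bounded in $D$ and every $x\in B$, if $\Phi(x,t)\in B$ for all $t>0$ with $(x,t)\in D_\Phi$, then the trajectory through $x$ is global in the future. Then $f$ is injective on $D$ and $f(D)$ is star-shaped with respect to $f(x_0)$.
   Context: Standing setting: $X,Y$ are real Banach spaces, $D\subseteq X$ is a nonempty open connected set, $f:D\to Y$ is a local homeomorphism (every point has an open neighbourhood mapped homeomorphically onto an open set), $x_0\in D$, $y_0=f(x_0)$. A flow in $D$ is a map $\Phi:D_\Phi\to D$ such that: (i) $D_\Phi$ is an open subset of $D\times\mathbb R$ and $\Phi$ is continuous; (ii) for each $x\in D$, $\{t:(x,t)\in D_\Phi\}$ is an interval containing $0$; (iii) $\Phi(x,0)=x$; (iv) if $(x,t_1),(x,t_1+t_2)\in D_\Phi$ then $(\Phi(x,t_1),t_2)\in D_\Phi$ and $\Phi(\Phi(x,t_1),t_2)=\Phi(x,t_1+t_2)$. The trajectory through $x$ is global in the future if $\{x\}\times[0,+\infty)\subseteq D_\Phi$. Let $\Psi(y,t)=y_0+e^{-t}(y-y_0)$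 for $y\in Y,t\in\mathbb R$. The auxiliary flow $\Phi$ is the unique flow in $D$ of maximal domain with $f(\Phi(x,t))=\Psi(f(x),t)$ for all $(x,t)\in D_\Phi$; for each $x$, $t\mapsto\Phi(x,t)$ is the maximal continuous lifting by $f$ of $t\mapsto\Psi(f(x),t)$ through $x$ at $t=0$. A set $B\subseteq D$ is bounded in $D$ if it is bounded in $X$ and its closure in $X$ is contained in $D$. A continuous $k:D\to[0,+\infty)$ is coercive if $k^{-1}([0,a])$ is bounded in $D$ for every $a>0$. A global Lyapunov function for $\Phi$ is a continuous, nonnegative, coercive $k:D\to[0,+\infty)$ such that $t\mapsto k(\Phi(x,t))$ is weakly decreasing for every $x\in D$. $f$ is a local $C^1$ diffeomorphism if it is $C^1$ and each point has an open neighbourhood mapped homeomorphically onto an open set with $C^1$ inverse. *)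

theory Defs
  imports "HOL-Analysis.Analysis"
begin

definition local_homeo :: "'a::topological_space set \<Rightarrow> ('a \<Rightarrow> 'b::topological_space) \<Rightarrow> bool" where
  "local_homeo D f \<longleftrightarrow> (\<forall>x\<in>D. \<exists>U g. open U \<and> x \<in> U \<and> U \<subseteq> D \<and> open (f ` U)
       \<and> homeomorphism U (f ` U) f g)"

definition is_flow :: "'a::topological_space set \<Rightarrow> ('a \<Rightarrow> real \<Rightarrow> 'a) \<Rightarrow> ('a \<times> real) set \<Rightarrow> bool" where
  "is_flow D Phi DPhi \<longleftrightarrow>
     DPhi \<subseteq> D \<times> UNIV \<and> open DPhi \<and> continuous_on DPhi (\<lambda>(x,t). Phi x t)
     \<and> (\<forall>(x,t)\<in>DPhi. Phi x t \<in> D)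
     \<and> (\<forall>x\<in>D. is_interval {t. (x,t) \<in> DPhi} \<and> (x,0) \<in> DPhi)
     \<and> (\<forall>x\<in>D. Phi x 0 = x)
     \<and> (\<forall>x t1 t2. (x,t1) \<in> DPhi \<longrightarrow> (x,t1+t2) \<in> DPhi \<longrightarrow>
          (Phi x t1, t2) \<in> DPhi \<and> Phi (Phi x t1) t2 = Phi x (t1+t2))"

definition Psi :: "'b::real_normed_vector \<Rightarrow> 'b \<Rightarrow> real \<Rightarrow> 'b" where
  "Psi y0 y t = y0 + exp (-t) *\<^sub>R (y - y0)"

definition lifts_Psi :: "'a::topological_space set \<Rightarrow> ('a \<Rightarrow> 'b::real_normed_vector) \<Rightarrow> 'a
     \<Rightarrow> ('a \<Rightarrow> real \<Rightarrow> 'a) \<Rightarrow> ('a \<times> real) set \<Rightarrow> bool" where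
  "lifts_Psi D f x0 Phi DPhi \<longleftrightarrow> is_flow D Phi DPhi \<and>
     (\<forall>(x,t)\<in>DPhi. f (Phi x t) = Psi (f x0) (f x) t)"

definition auxiliary_flow :: "'a::topological_space set \<Rightarrow> ('a \<Rightarrow> 'b::real_normed_vector) \<Rightarrow> 'a
     \<Rightarrow> ('a \<Rightarrow> real \<Rightarrow> 'a) \<Rightarrow> ('a \<times> real) set \<Rightarrow> bool" where
  "auxiliary_flow D f x0 Phi DPhi \<longleftrightarrow> lifts_Psi D f x0 Phi DPhi \<and>
     (\<forall>Phi' DPhi'. lifts_Psi D f x0 Phi' DPhi' \<longrightarrow> DPhi' \<subseteq> DPhi)"

definition bounded_in :: "'a::metric_space set \<Rightarrow> 'a set \<Rightarrow> bool" where
  "bounded_in D B \<longleftrightarrow> bounded B \<and> closure B \<subseteq> D"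

definition coercive_on :: "'a::metric_space set \<Rightarrow> ('a \<Rightarrow> real) \<Rightarrow> bool" where
  "coercive_on D k \<longleftrightarrow> (\<forall>a>0. bounded_in D {x\<in>D. k x \<le> a})"

definition global_lyapunov :: "'a::metric_space set \<Rightarrow> ('a \<Rightarrow> real \<Rightarrow> 'a) \<Rightarrow> ('a \<times> real) set
     \<Rightarrow> ('a \<Rightarrow> real) \<Rightarrow> bool" where
  "global_lyapunov D Phi DPhi k \<longleftrightarrow> continuous_on D k \<and> (\<forall>x\<in>D. 0 \<le> k x) \<and> coercive_on D k
     \<and> (\<forall>x\<in>D. \<forall>s t. (x,s) \<in> DPhi \<longrightarrow> (x,t) \<in> DPhi \<longrightarrow> s \<le> t \<longrightarrow> k (Phi x t) \<le> k (Phi x s))"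

definition C1_on :: "'a::real_normed_vector set \<Rightarrow> ('a \<Rightarrow> 'b::real_normed_vector) \<Rightarrow> ('a \<Rightarrow> 'a \<Rightarrow>\<^sub>L 'b) \<Rightarrow> bool" where
  "C1_on D f f' \<longleftrightarrow> (\<forall>x\<in>D. (f has_derivative blinfun_apply (f' x)) (at x)) \<and> continuous_on D f'"

definition local_C1_diffeo :: "'a::real_normed_vector set \<Rightarrow> ('a \<Rightarrow> 'b::real_normed_vector) \<Rightarrow> ('a \<Rightarrow> 'a \<Rightarrow>\<^sub>L 'b) \<Rightarrow> bool" where
  "local_C1_diffeo D f f' \<longleftrightarrow> C1_on D f f' \<and>
     (\<forall>x\<in>D. \<exists>U g g'. open U \<and> x \<in> U \<and> U \<subseteq> D \<and> open (f ` U)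
        \<and> homeomorphism U (f ` U) f g \<and> C1_on (f ` U) g g')"

definition proper_on :: "'a::topological_space set \<Rightarrow> ('a \<Rightarrow> 'b::topological_space) \<Rightarrow> bool" where
  "proper_on B f \<longleftrightarrow> (\<forall>K. compact K \<longrightarrow> compact (B \<inter> f -` K))"

definition cond_a1 where
  "cond_a1 D f \<longleftrightarrow> (\<forall>B. closed B \<and> bounded_in D B \<longrightarrow> proper_on B f)"

definition cond_a2 :: "'a::real_normed_vector set \<Rightarrow> ('a \<Rightarrow> 'b::real_normed_vector) \<Rightarrow> bool" where
  "cond_a2 D f \<longleftrightarrow> (\<exists>f'. local_C1_diffeo D f f' \<and>
     (\<forall>B. closed B \<and> bounded_in D B \<longrightarrow>
        (\<exists>M. \<forall>x\<in>B. \<exists>L. L o\<^sub>L f' x = id_blinfun \<and> f' x o\<^sub>L L = id_blinfun \<and> norm L \<le> M)))"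

definition cond_b :: "'a::real_normed_vector set \<Rightarrow> ('a \<Rightarrow> 'b::real_normed_vector) \<Rightarrow> 'a \<Rightarrow> bool" where
  "cond_b D f x0 \<longleftrightarrow> (\<forall>B. closed B \<and> bounded_in D B \<longrightarrow> (\<forall>x\<in>B.
     \<forall>C \<in> components ({z\<in>D. f z \<in> closed_segment (f x0) (f x)} \<inter> B). compact C))"

definition cond_c :: "'a::metric_space set \<Rightarrow> ('a \<Rightarrow> real \<Rightarrow> 'a) \<Rightarrow> ('a \<times> real) set \<Rightarrow> bool" where
  "cond_c D Phi DPhi \<longleftrightarrow> (\<forall>B. closed B \<and> bounded_in D B \<longrightarrow> (\<forall>x\<in>B.
     (\<forall>t>0. (x,t) \<in> DPhi \<longrightarrow> Phi x t \<in> B) \<longrightarrow> {x} \<times> {0..} \<subseteq> DPhi))"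

end

theory Submission
  imports Defs
begin

text \<open>
  Along the auxiliary flow, \<open>f\<close> maps every trajectory onto a segment contracting towards
  \<open>f x0\<close>. A Lyapunov function traps each forward trajectory in a closed set bounded in \<open>D\<close>,
  and each of the conditions (a-1), (a-2), (b), (c) prevents a trapped trajectory from
  escaping in finite time: a finite escape time \<open>\<omega>\<close> would produce a limit point in \<open>D\<close>
  at time \<open>\<omega>\<close>, beyond which the maximal flow could be continued.
  Once all forward trajectories are global, the points whose trajectory eventually enters a
  chart around \<open>x0\<close> form a nonempty subset of \<open>D\<close> that is both open and closed, hence all
  of \<open>D\<close>. Two points with the same image then reach the same point of the chart at a common
  time, so they coincide; and running the flow from \<open>x\<close> sweeps out the segment from \<open>f x\<close>
  to \<open>f x0\<close>.
\<close>

lemma closed_bounded_in_subset: "closed B \<Longrightarrow> bounded_in D B \<Longrightarrow> B \<subseteq> D"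
  using closure_closed[of B] by (auto simp: bounded_in_def)

lemma LIMSEQ_from_below:
  fixes \<omega> :: real
  assumes "0 < \<omega>" obtains tt where "\<And>n. tt n \<in> {0..<\<omega>}" "tt \<longlonglongrightarrow> \<omega>"
proof -
  have "\<omega> \<in> closure {0..<\<omega>}" using assms by simp
  then show ?thesis using that closure_sequential by metis
qed

section \<open>The contraction \<open>Psi\<close>\<close>

lemma Psi_add: "Psi y0 (Psi y0 y a) b = Psi y0 y (a + b)"
  by (simp add: Psi_def exp_add[symmetric] mult.commute)

lemma Psi_0 [simp]: "Psi y0 y 0 = y"
  by (simp add: Psi_def)

lemma dist_Psi: "dist y0 (Psi y0 y t) = exp (-t) * dist y0 y"
  by (simp add: Psi_def dist_norm norm_minus_commute)

lemma Psi_in_closed_segment: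
  assumes "0 \<le> t" shows "Psi y0 y t \<in> closed_segment y0 y"
proof -
  have "Psi y0 y t = (1 - exp (-t)) *\<^sub>R y0 + exp (-t) *\<^sub>R y"
    by (simp add: Psi_def algebra_simps)
  moreover have "0 \<le> exp (-t)" "exp (-t) \<le> 1" using assms by auto
  ultimately show ?thesis unfolding closed_segment_def by blast
qed

lemma Psi_in_ball:
  assumes "y \<in> ball y0 r" and "0 \<le> t" shows "Psi y0 y t \<in> ball y0 r"
proof -
  have "exp (-t) * dist y0 y \<le> dist y0 y"
    using assms(2) by (simp add: mult_left_le_one_le)
  then show ?thesis using assms(1) by (simp add: dist_Psi)
qed

lemma Psi_eventually_in_ball:
  assumes "r > 0" obtains T where "0 \<le> T" "Psi y0 y T \<in> ball y0 r"
proof -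
  have "((\<lambda>T. exp (-T) * dist y0 y) \<longlongrightarrow> 0 * dist y0 y) at_top"
    by (intro tendsto_intros filterlim_compose[OF exp_at_bot filterlim_uminus_at_bot_at_top])
  then have "eventually (\<lambda>T. exp (-T) * dist y0 y < r) at_top"
    using assms by (simp add: order_tendstoD(2))
  then obtain N where "\<And>T. N \<le> T \<Longrightarrow> exp (-T) * dist y0 y < r"
    by (auto simp: eventually_at_top_linorder)
  then show ?thesis using that[of "max 0 N"] by (simp add: dist_Psi)
qed

lemma Psi_has_derivative:
  "(Psi y0 y has_derivative (\<lambda>h. h *\<^sub>R (- exp (-t) *\<^sub>R (y - y0)))) (at t)"
  unfolding Psi_def by (auto intro!: derivative_eq_intros simp: fun_eq_iff algebra_simps)

section \<open>Local homeomorphisms\<close>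

lemma local_homeo_imp_continuous_on:
  fixes f :: "'a::metric_space \<Rightarrow> 'b::metric_space"
  assumes "open D" "local_homeo D f" shows "continuous_on D f"
proof -
  have "isCont f x" if x: "x \<in> D" for x
  proof -
    obtain U g where U: "open U" "x \<in> U" "homeomorphism U (f ` U) f g"
      using bspec[OF assms(2)[unfolded local_homeo_def] x] by blast
    then show ?thesis
      using homeomorphism_cont1[OF U(3)] by (simp add: continuous_on_eq_continuous_at)
  qed
  then show ?thesis using assms(1) by (simp add: continuous_on_eq_continuous_at)
qed

text \<open>The set where two liftings agree is closed, and it is open because near a common
  value both lie in one chart, on which \<open>f\<close> is injective.\<close>

lemma local_homeo_lift_unique:
  fixes \<gamma>1 \<gamma>2 :: "'c::topological_space \<Rightarrow> 'a::metric_space"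
  assumes "local_homeo D f" and "connected I"
    and "continuous_on I \<gamma>1" "continuous_on I \<gamma>2" "\<gamma>1 ` I \<subseteq> D" "\<gamma>2 ` I \<subseteq> D"
    and "\<And>u. u \<in> I \<Longrightarrow> f (\<gamma>1 u) = f (\<gamma>2 u)"
    and "a \<in> I" "\<gamma>1 a = \<gamma>2 a" and "u \<in> I"
  shows "\<gamma>1 u = \<gamma>2 u"
proof -
  define E where "E = {u\<in>I. \<gamma>1 u = \<gamma>2 u}"
  have "closedin (top_of_set I) E"
    using continuous_closedin_preimage_constant[OF continuous_on_dist[OF assms(3,4)], of 0]
    by (simp add: E_def)
  moreover have "openin (top_of_set I) E"
    unfolding openin_subopen[of _ E]
  proof
    fix v assume "v \<in> E"
    then have v: "v \<in> I" "\<gamma>1 v = \<gamma>2 v" by (auto simp: E_def)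
    have "\<gamma>1 v \<in> D" using assms(5) v(1) by blast
    then obtain U g where U: "open U" "\<gamma>1 v \<in> U" "homeomorphism U (f ` U) f g"
      using bspec[OF assms(1)[unfolded local_homeo_def]] by blast
    define N where "N = (I \<inter> \<gamma>1 -` U) \<inter> (I \<inter> \<gamma>2 -` U)"
    have "openin (top_of_set I) N"
      unfolding N_def using U(1) assms(3,4) by (intro openin_Int continuous_openin_preimage_gen)
    moreover have "N \<subseteq> E"
    proof
      fix u assume "u \<in> N"
      then have "u \<in> I" "\<gamma>1 u \<in> U" "\<gamma>2 u \<in> U" by (auto simp: N_def)
      then have "\<gamma>1 u = g (f (\<gamma>1 u))" "\<gamma>2 u = g (f (\<gamma>2 u))"
        using homeomorphism_apply1[OF U(3)] by simp_all
      then show "u \<in> E" using assms(7) \<open>u \<in> I\<close> by (simp add: E_def)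
    qed
    ultimately show "\<exists>N. openin (top_of_set I) N \<and> v \<in> N \<and> N \<subseteq> E"
      using U(2) v by (auto simp: N_def)
  qed
  ultimately have "E = {} \<or> E = I" using assms(2) connected_clopen by blast
  moreover have "a \<in> E" using assms(8,9) by (simp add: E_def)
  ultimately have "E = I" by blast
  then show ?thesis using assms(10) by (auto simp: E_def)
qed

lemma inverse_derivative_eq:
  assumes "open U" "q \<in> U" "\<And>z. z \<in> U \<Longrightarrow> g (f z) = z"
    and "(f has_derivative blinfun_apply F) (at q)" "(g has_derivative blinfun_apply G) (at (f q))"
    and "F o\<^sub>L L = id_blinfun"
  shows "G = L"
proof -
  have "((\<lambda>z. g (f z)) has_derivative (\<lambda>h. G (F h))) (at q)"
    using has_derivative_compose[OF assms(4,5)] .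
  moreover have "((\<lambda>z. g (f z)) has_derivative (\<lambda>h. h)) (at q)"
    by (rule has_derivative_transform_within_open[OF has_derivative_ident assms(1,2)]) (simp add: assms(3))
  ultimately have GF: "G (F h) = h" for h using has_derivative_unique by metis
  show ?thesis
  proof (rule blinfun_eqI)
    fix h
    have "F (L h) = h" using arg_cong[OF assms(6), of "\<lambda>T. blinfun_apply T h"] by simp
    then show "G h = L h" using GF[of "L h"] by simp
  qed
qed

section \<open>The auxiliary flow\<close>

locale aux_flow =
  fixes D :: "'a::banach set" and f :: "'a \<Rightarrow> 'b::banach" and x0 :: 'a
    and Phi :: "'a \<Rightarrow> real \<Rightarrow> 'a" and P :: "('a \<times> real) set"
  assumes open_D: "open D" and local_homeo: "local_homeo D f" and x0_in_D: "x0 \<in> D"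
    and auxiliary_flow: "auxiliary_flow D f x0 Phi P"
begin

abbreviation "y0 \<equiv> f x0"

lemma is_flow: "is_flow D Phi P"
  using auxiliary_flow by (simp add: auxiliary_flow_def lifts_Psi_def)

lemma domain_fst: "(z,t) \<in> P \<Longrightarrow> z \<in> D"
  and Phi_in_D: "(z,t) \<in> P \<Longrightarrow> Phi z t \<in> D"
  and domain_zero: "z \<in> D \<Longrightarrow> (z,0) \<in> P"
  and Phi_zero [simp]: "z \<in> D \<Longrightarrow> Phi z 0 = z"
  and domain_interval: "z \<in> D \<Longrightarrow> is_interval {t. (z,t) \<in> P}"
  and open_domain: "open P"
  and continuous_on_Phi: "continuous_on P (\<lambda>(x,t). Phi x t)"
  using is_flow by (auto simp: is_flow_def)

lemma Phi_add:
  "(x,t1) \<in> P \<Longrightarrow> (x,t1+t2) \<in> P \<Longrightarrow> (Phi x t1, t2) \<in> P \<and> Phi (Phi x t1) t2 = Phi x (t1+t2)"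
  using is_flow unfolding is_flow_def by blast

lemma f_Phi: "(z,t) \<in> P \<Longrightarrow> f (Phi z t) = Psi y0 (f z) t"
  using auxiliary_flow by (auto simp: auxiliary_flow_def lifts_Psi_def)

lemma domain_maximal: "lifts_Psi D f x0 Phi' P' \<Longrightarrow> P' \<subseteq> P"
  using auxiliary_flow by (auto simp: auxiliary_flow_def)

lemma continuous_on_f: "continuous_on D f"
  using local_homeo_imp_continuous_on[OF open_D local_homeo] .

lemma domain_closed_segment:
  assumes "(z,t) \<in> P" "u \<in> closed_segment 0 t" shows "(z,u) \<in> P"
proof -
  have I: "is_interval {t. (z,t) \<in> P}" and "0 \<in> {t. (z,t) \<in> P}" "t \<in> {t. (z,t) \<in> P}"
    using domain_interval domain_zero domain_fst[OF assms(1)] assms(1) by auto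
  moreover have "0 \<le> u \<and> u \<le> t \<or> t \<le> u \<and> u \<le> 0"
    using assms(2) by (auto simp: closed_segment_eq_real_ivl split: if_splits)
  ultimately show ?thesis using I unfolding is_interval_1 by blast
qed

lemma open_time_slice: "open {t. (z,t) \<in> P}"
proof -
  have "continuous_on UNIV (Pair z :: real \<Rightarrow> _)" by (intro continuous_intros)
  then have "open (Pair z -` P)" by (rule open_vimage[OF open_domain])
  moreover have "Pair z -` P = {t. (z,t) \<in> P}" by auto
  ultimately show ?thesis by simp
qed

lemma continuous_on_trajectory:
  assumes "S \<subseteq> {t. (z,t) \<in> P}" shows "continuous_on S (Phi z)"
proof -
  have "continuous_on S (\<lambda>u. (\<lambda>(x,t). Phi x t) (z, u))"
    by (rule continuous_on_compose2[OF continuous_on_Phi continuous_on_Pair[OF continuous_on_const continuous_on_id]])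
      (use assms in auto)
  then show ?thesis by simp
qed

lemma Phi_backward:
  assumes "(z,t) \<in> P" shows "(Phi z t, -t) \<in> P" "Phi (Phi z t) (-t) = z"
proof -
  have "(z, t + -t) \<in> P" using domain_zero[OF domain_fst[OF assms]] by simp
  from Phi_add[OF assms this] show "(Phi z t, -t) \<in> P" "Phi (Phi z t) (-t) = z"
    using domain_fst[OF assms] by simp_all
qed

lemma Phi_inj:
  assumes "(z,t) \<in> P" "(z',t) \<in> P" "Phi z t = Phi z' t" shows "z = z'"
proof -
  have "z = Phi (Phi z' t) (-t)" using Phi_backward(2)[OF assms(1)] assms(3) by simp
  also have "\<dots> = z'" using Phi_backward(2)[OF assms(2)] .
  finally show ?thesis .
qed

text \<open>\<open>reach z s w\<close>: the point \<open>w\<close> is reached from \<open>z\<close> in total time \<open>s\<close> by following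
  finitely many pieces of trajectories. These chains form a flow lifting \<open>Psi\<close>; by maximality
  its domain is contained in \<open>P\<close>, so trajectories of \<open>Phi\<close> can be concatenated.\<close>

inductive reach :: "'a \<Rightarrow> real \<Rightarrow> 'a \<Rightarrow> bool" where
  base: "(z,t) \<in> P \<Longrightarrow> reach z t (Phi z t)"
| step: "reach z s w \<Longrightarrow> (w,t) \<in> P \<Longrightarrow> reach z (s+t) (Phi w t)"

lemma reach_in_D: "reach z s w \<Longrightarrow> z \<in> D \<and> w \<in> D"
proof (induction rule: reach.induct)
  case (base z t)
  then show ?case using domain_fst Phi_in_D by simp
next
  case (step z s w t)
  then show ?case using Phi_in_D by simp
qed

lemma f_reach: "reach z s w \<Longrightarrow> f w = Psi y0 (f z) s"
  by (induction rule: reach.induct) (auto simp: f_Phi Psi_add)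

lemma reach_trans: "reach b s' c \<Longrightarrow> reach a s b \<Longrightarrow> reach a (s+s') c"
proof (induction rule: reach.induct)
  case (base z t)
  then show ?case using reach.step by blast
next
  case (step z s1 w t)
  then have "reach a (s + s1 + t) (Phi w t)" using reach.step by blast
  then show ?case by (simp add: add.assoc)
qed

lemma reach_reverse: "reach z s w \<Longrightarrow> reach w (-s) z"
proof (induction rule: reach.induct)
  case (base z t)
  then show ?case using reach.base[of "Phi z t" "-t"] Phi_backward by simp
next
  case (step z s w t)
  then have "reach (Phi w t) (-t) w" using reach.base[of "Phi w t" "-t"] Phi_backward by simp
  from reach_trans[OF step.IH this] show ?case by (simp add: add.commute)
qed

lemma reach_intermediate: "reach z s w \<Longrightarrow> u \<in> closed_segment 0 s \<Longrightarrow> \<exists>w'. reach z u w'"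
proof (induction arbitrary: u rule: reach.induct)
  case (base z t)
  then show ?case using domain_closed_segment reach.base by blast
next
  case (step z s w t)
  show ?case
  proof (cases "u \<in> closed_segment 0 s")
    case True
    then show ?thesis using step.IH by blast
  next
    case False
    then have "u - s \<in> closed_segment 0 t"
      using step.prems by (auto simp: closed_segment_eq_real_ivl split: if_splits)
    then have "(w, u - s) \<in> P" using domain_closed_segment step.hyps(2) by blast
    then have "reach z (s + (u - s)) (Phi w (u - s))" using reach.step[OF step.hyps(1)] by blast
    then show ?thesis by auto
  qed
qed

lemma reach_lifted_path:
  assumes "reach z s w"
  shows "\<exists>\<gamma>. continuous_on (closed_segment 0 s) \<gamma> \<and> \<gamma> ` closed_segment 0 s \<subseteq> D
    \<and> \<gamma> 0 = z \<and> \<gamma> s = w \<and> (\<forall>u\<in>closed_segment 0 s. f (\<gamma> u) = Psi y0 (f z) u)"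
  using assms
proof (induction rule: reach.induct)
  case (base z t)
  have sub: "closed_segment 0 t \<subseteq> {u. (z,u) \<in> P}" using domain_closed_segment base by blast
  then show ?case
    using continuous_on_trajectory[OF sub] Phi_in_D f_Phi domain_fst[OF base]
    by (intro exI[of _ "Phi z"]) auto
next
  case (step z s w t)
  obtain \<gamma> where \<gamma>: "continuous_on (closed_segment 0 s) \<gamma>" "\<gamma> ` closed_segment 0 s \<subseteq> D"
    "\<gamma> 0 = z" "\<gamma> s = w" "\<forall>u\<in>closed_segment 0 s. f (\<gamma> u) = Psi y0 (f z) u"
    using step.IH by blast
  define S where "S = closed_segment (0::real) s"
  define T where "T = closed_segment s (s+t)"
  define \<delta> where "\<delta> = (\<lambda>u. Phi w (u - s))"
  have T_domain: "(w, u - s) \<in> P" if "u \<in> T" for u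
    using domain_closed_segment[OF step.hyps(2)] that
    by (auto simp: T_def closed_segment_eq_real_ivl split: if_splits)
  have \<delta>_cont: "continuous_on T \<delta>"
    unfolding \<delta>_def
    by (rule continuous_on_compose2[OF continuous_on_Phi, where f = "\<lambda>u. (w, u - s)", simplified])
      (auto intro!: continuous_intros T_domain)
  have \<delta>_D: "\<delta> ` T \<subseteq> D" using T_domain Phi_in_D by (auto simp: \<delta>_def)
  have f_w: "f w = Psi y0 (f z) s" using \<gamma>(4,5) by auto
  have f_\<delta>: "f (\<delta> u) = Psi y0 (f z) u" if "u \<in> T" for u
    using f_Phi[OF T_domain[OF that]] f_w Psi_add[of y0 "f z" s "u - s"] by (simp add: \<delta>_def)
  have \<delta>_s: "\<delta> s = w" using domain_fst[OF step.hyps(2)] by (simp add: \<delta>_def)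
  have agree: "\<gamma> u = \<delta> u" if "u \<in> S \<inter> T" for u
  proof (rule local_homeo_lift_unique[OF local_homeo, of "S \<inter> T" \<gamma> \<delta> s])
    show "connected (S \<inter> T)" unfolding S_def T_def
      by (intro convex_connected convex_Int convex_closed_segment)
    show "continuous_on (S \<inter> T) \<gamma>" "continuous_on (S \<inter> T) \<delta>"
      using \<gamma>(1) \<delta>_cont by (auto simp: S_def intro: continuous_on_subset)
  qed (use \<gamma> \<delta>_D f_\<delta> \<delta>_s that in \<open>auto simp: S_def T_def\<close>)
  define \<gamma>' where "\<gamma>' = (\<lambda>u. if u \<in> S then \<gamma> u else \<delta> u)"
  have "continuous_on (S \<union> T) \<gamma>'" unfolding \<gamma>'_def
    by (rule continuous_on_cases) (use \<gamma>(1) \<delta>_cont agree in \<open>auto simp: S_def T_def\<close>)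
  moreover have sub: "closed_segment 0 (s+t) \<subseteq> S \<union> T"
    by (auto simp: S_def T_def closed_segment_eq_real_ivl split: if_splits)
  ultimately have "continuous_on (closed_segment 0 (s+t)) \<gamma>'"
    by (rule continuous_on_subset)
  moreover have "\<gamma>' (s + t) = Phi w t"
    using agree[of "s+t"] by (simp add: \<gamma>'_def \<delta>_def T_def)
  moreover have "\<gamma>' ` closed_segment 0 (s+t) \<subseteq> D"
    using sub \<gamma>(2) \<delta>_D by (auto simp: \<gamma>'_def S_def)
  moreover have "\<forall>u\<in>closed_segment 0 (s+t). f (\<gamma>' u) = Psi y0 (f z) u"
    using sub \<gamma>(5) f_\<delta> by (auto simp: \<gamma>'_def S_def)
  moreover have "\<gamma>' 0 = z" using \<gamma>(3) by (simp add: \<gamma>'_def S_def)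
  ultimately show ?case by blast
qed

lemma reach_unique:
  assumes "reach z s w" "reach z s w'" shows "w = w'"
proof -
  obtain \<gamma>1 where "continuous_on (closed_segment 0 s) \<gamma>1" "\<gamma>1 ` closed_segment 0 s \<subseteq> D"
    "\<gamma>1 0 = z" "\<gamma>1 s = w" "\<forall>u\<in>closed_segment 0 s. f (\<gamma>1 u) = Psi y0 (f z) u"
    using reach_lifted_path[OF assms(1)] by blast
  moreover obtain \<gamma>2 where "continuous_on (closed_segment 0 s) \<gamma>2" "\<gamma>2 ` closed_segment 0 s \<subseteq> D"
    "\<gamma>2 0 = z" "\<gamma>2 s = w'" "\<forall>u\<in>closed_segment 0 s. f (\<gamma>2 u) = Psi y0 (f z) u"
    using reach_lifted_path[OF assms(2)] by blast
  ultimately show "w = w'"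
    using local_homeo_lift_unique[OF local_homeo connected_segment, of 0 s \<gamma>1 \<gamma>2 0 s] by auto
qed

text \<open>Near a chain, chains of the same combinatorial shape exist and depend continuously on
  their initial point and total time, because \<open>P\<close> is open and \<open>Phi\<close> continuous.\<close>

lemma reach_locally:
  assumes "reach z s w"
  shows "\<exists>N h. open N \<and> (z,s) \<in> N \<and> continuous_on N h \<and> (\<forall>q\<in>N. reach (fst q) (snd q) (h q))"
  using assms
proof (induction rule: reach.induct)
  case (base z t)
  then show ?case
    using open_domain continuous_on_Phi reach.base
    by (intro exI[of _ P] exI[of _ "\<lambda>(x,t). Phi x t"]) auto
next
  case (step z s w t)
  obtain N h where N: "open N" "(z,s) \<in> N" "continuous_on N h" "\<forall>q\<in>N. reach (fst q) (snd q) (h q)"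
    using step.IH by blast
  define m where "m = (\<lambda>q::'a\<times>real. (fst q, snd q - t))"
  define N' where "N' = m -` N \<inter> (\<lambda>q. (h (m q), t)) -` P"
  have m_cont: "continuous_on UNIV m" unfolding m_def by (intro continuous_intros)
  have cont: "continuous_on (m -` N) (\<lambda>q. (h (m q), t))"
  proof (intro continuous_on_Pair continuous_on_const)
    show "continuous_on (m -` N) (\<lambda>q. h (m q))"
      by (rule continuous_on_compose2[OF N(3) continuous_on_subset[OF m_cont]]) auto
  qed
  have "open N'"
    unfolding N'_def by (rule continuous_open_preimage[OF cont open_vimage[OF N(1) m_cont] open_domain])
  have "h (z,s) = w" using N(2,4) reach_unique[OF step.hyps(1)] by fastforce
  show ?case
  proof (intro exI[of _ N'] exI[of _ "\<lambda>q. Phi (h (m q)) t"] conjI ballI)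
    show "open N'" by fact
    show "(z, s + t) \<in> N'" using N(2) \<open>h (z,s) = w\<close> step.hyps(2) by (simp add: N'_def m_def)
    have "continuous_on N' (\<lambda>q. (\<lambda>(x,t). Phi x t) (h (m q), t))"
      by (rule continuous_on_compose2[OF continuous_on_Phi continuous_on_subset[OF cont]]) (auto simp: N'_def)
    then show "continuous_on N' (\<lambda>q. Phi (h (m q)) t)" by simp
    fix q assume "q \<in> N'"
    then have "reach (fst q) (snd q - t) (h (m q))" "(h (m q), t) \<in> P"
      using N(4) by (force simp: N'_def m_def)+
    from reach.step[OF this] show "reach (fst q) (snd q) (Phi (h (m q)) t)" by simp
  qed
qed

definition chain_domain :: "('a \<times> real) set" where
  "chain_domain = {(z,s). \<exists>w. reach z s w}"

definition chain_flow :: "'a \<Rightarrow> real \<Rightarrow> 'a" where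
  "chain_flow z s = (THE w. reach z s w)"

lemma chain_flow_eq: "reach z s w \<Longrightarrow> chain_flow z s = w"
  unfolding chain_flow_def using reach_unique by blast

lemma open_chain_domain: "open chain_domain"
proof (subst open_subopen, intro ballI)
  fix q assume "q \<in> chain_domain"
  then obtain z s w where q: "q = (z,s)" "reach z s w" by (auto simp: chain_domain_def)
  obtain N h where N: "open N" "(z,s) \<in> N" "\<forall>q\<in>N. reach (fst q) (snd q) (h q)"
    using reach_locally[OF q(2)] by blast
  have "N \<subseteq> chain_domain"
  proof
    fix p assume "p \<in> N"
    then have "reach (fst p) (snd p) (h p)" using N(3) by blast
    then show "p \<in> chain_domain" by (cases p) (auto simp: chain_domain_def)
  qed
  then show "\<exists>T. open T \<and> q \<in> T \<and> T \<subseteq> chain_domain" using N(1,2) q(1) by blast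
qed

lemma continuous_on_chain_flow: "continuous_on chain_domain (\<lambda>(x,t). chain_flow x t)"
proof (subst continuous_on_eq_continuous_at[OF open_chain_domain], intro ballI)
  fix q assume "q \<in> chain_domain"
  then obtain z s w where q: "q = (z,s)" "reach z s w" by (auto simp: chain_domain_def)
  obtain N h where N: "open N" "(z,s) \<in> N" "continuous_on N h" "\<forall>q\<in>N. reach (fst q) (snd q) (h q)"
    using reach_locally[OF q(2)] by blast
  have "continuous_on N (\<lambda>(x,t). chain_flow x t)"
  proof (rule continuous_on_eq[OF N(3)])
    fix p assume "p \<in> N"
    then have "reach (fst p) (snd p) (h p)" using N(4) by blast
    then show "h p = (\<lambda>(x,t). chain_flow x t) p" using chain_flow_eq by (simp add: split_beta)
  qed
  then show "isCont (\<lambda>(x,t). chain_flow x t) q"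
    using N(1,2) q(1) by (simp add: continuous_on_eq_continuous_at)
qed

lemma lifts_Psi_chain_flow: "lifts_Psi D f x0 chain_flow chain_domain"
  unfolding lifts_Psi_def is_flow_def
proof (intro conjI ballI allI impI)
  show "chain_domain \<subseteq> D \<times> UNIV" using reach_in_D by (auto simp: chain_domain_def)
  show "open chain_domain" by (rule open_chain_domain)
  show "continuous_on chain_domain (\<lambda>(x,t). chain_flow x t)" by (rule continuous_on_chain_flow)
  fix q assume "q \<in> chain_domain"
  then show "case q of (x, t) \<Rightarrow> chain_flow x t \<in> D"
    and "case q of (x, t) \<Rightarrow> f (chain_flow x t) = Psi (f x0) (f x) t"
    using reach_in_D f_reach chain_flow_eq by (auto simp: chain_domain_def)
next
  fix x assume "x \<in> D"
  then have reach_0: "reach x 0 x" using reach.base[OF domain_zero] by fastforce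
  then show "(x,0) \<in> chain_domain" "chain_flow x 0 = x"
    using chain_flow_eq by (auto simp: chain_domain_def)
  show "is_interval {t. (x, t) \<in> chain_domain}" unfolding is_interval_1
  proof (intro ballI allI impI)
    fix a b c assume "a \<in> {t. (x, t) \<in> chain_domain}" "b \<in> {t. (x, t) \<in> chain_domain}"
      and c: "a \<le> c \<and> c \<le> b"
    then obtain wa wb where "reach x a wa" "reach x b wb" by (auto simp: chain_domain_def)
    moreover have "c \<in> closed_segment 0 a \<or> c \<in> closed_segment 0 b"
      using c by (auto simp: closed_segment_eq_real_ivl)
    ultimately show "c \<in> {t. (x, t) \<in> chain_domain}"
      using reach_intermediate by (auto simp: chain_domain_def)
  qed
next
  fix x t1 t2 assume "(x, t1) \<in> chain_domain" "(x, t1 + t2) \<in> chain_domain"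
  then obtain w1 w2 where r1: "reach x t1 w1" and r2: "reach x (t1+t2) w2"
    by (auto simp: chain_domain_def)
  then have "reach w1 t2 w2" using reach_trans[OF r2 reach_reverse[OF r1]] by simp
  then show "(chain_flow x t1, t2) \<in> chain_domain" "chain_flow (chain_flow x t1) t2 = chain_flow x (t1 + t2)"
    using chain_flow_eq r1 r2 by (auto simp: chain_domain_def)
qed

lemma domain_concat:
  assumes "(z,t1) \<in> P" "(Phi z t1, t2) \<in> P" shows "(z, t1+t2) \<in> P"
proof -
  have "(z, t1+t2) \<in> chain_domain"
    using reach.step[OF reach.base[OF assms(1)] assms(2)] by (auto simp: chain_domain_def)
  then show ?thesis using domain_maximal[OF lifts_Psi_chain_flow] by blast
qed

lemma f_Phi_in_closed_segment: "(x,t) \<in> P \<Longrightarrow> 0 \<le> t \<Longrightarrow> f (Phi x t) \<in> closed_segment y0 (f x)"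
  using f_Phi Psi_in_closed_segment by simp

lemma escape_time:
  assumes "x \<in> D" "0 \<le> T" "(x,T) \<notin> P"
  obtains \<omega> where "0 < \<omega>" "\<And>t. 0 \<le> t \<Longrightarrow> (x,t) \<in> P \<longleftrightarrow> t < \<omega>"
proof -
  define A where "A = {t. 0 \<le> t \<and> (x,t) \<in> P}"
  have A0: "0 \<in> A" using domain_zero[OF assms(1)] by (simp add: A_def)
  have "t \<le> T" if "t \<in> A" for t
  proof (rule ccontr)
    assume "\<not> t \<le> T"
    then have "T \<in> closed_segment 0 t" using assms(2) by (simp add: closed_segment_eq_real_ivl)
    then show False using domain_closed_segment assms(3) that by (auto simp: A_def)
  qed
  then have bdd: "bdd_above A" by (auto simp: bdd_above_def)
  have below: "(x,t) \<in> P" if "0 \<le> t" "t < Sup A" for t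
  proof -
    obtain a where "a \<in> A" "t < a" using less_cSup_iff[OF _ bdd] A0 \<open>t < Sup A\<close> by blast
    moreover have "t \<in> closed_segment 0 a" using \<open>0 \<le> t\<close> \<open>t < a\<close> by (simp add: closed_segment_eq_real_ivl)
    ultimately show ?thesis using domain_closed_segment by (auto simp: A_def)
  qed
  have above: "(x,t) \<notin> P" if "Sup A \<le> t" for t
  proof
    assume "(x,t) \<in> P"
    then obtain e where "e > 0" "ball t e \<subseteq> {s. (x,s) \<in> P}"
      using open_time_slice open_contains_ball by blast
    moreover have "t + e/2 \<in> ball t e" using \<open>e > 0\<close> by (simp add: dist_real_def)
    ultimately have "t + e/2 \<in> A"
      using that cSup_upper[OF A0 bdd] \<open>e > 0\<close> by (auto simp: A_def)
    then show False using cSup_upper[OF _ bdd] that \<open>e > 0\<close> by fastforce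
  qed
  have "0 < Sup A" using above[of 0] domain_zero[OF assms(1)] by linarith
  then show ?thesis using that below above by (meson not_less)
qed

text \<open>The flow through points near \<open>p\<close> exists for a uniform positive time, so concatenation
  would extend the trajectory beyond \<open>\<omega>\<close>.\<close>

lemma escape_no_limit:
  assumes "\<And>t. 0 \<le> t \<Longrightarrow> (x,t) \<in> P \<longleftrightarrow> t < \<omega>"
    and "\<And>n. tt n \<in> {0..<\<omega>}" "tt \<longlonglongrightarrow> \<omega>" "(\<lambda>n. Phi x (tt n)) \<longlonglongrightarrow> p"
  shows "p \<notin> D"
proof
  assume "p \<in> D"
  then obtain A B where AB: "open A" "open B" "(p,0) \<in> A \<times> B" "A \<times> B \<subseteq> P"
    using open_prod_elim[OF open_domain domain_zero] by metis
  then obtain \<delta> where "\<delta> > 0" "ball 0 \<delta> \<subseteq> B" using open_contains_ball by blast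
  then have "\<delta>/2 \<in> B" by (auto simp: dist_real_def)
  have "eventually (\<lambda>n. Phi x (tt n) \<in> A) sequentially"
    using topological_tendstoD[OF assms(4)] AB by blast
  moreover have "eventually (\<lambda>n. \<omega> - \<delta>/2 < tt n) sequentially"
    using order_tendstoD(1)[OF assms(3)] \<open>\<delta> > 0\<close> by simp
  ultimately obtain n where "Phi x (tt n) \<in> A" "\<omega> - \<delta>/2 < tt n"
    using eventually_happens'[OF sequentially_bot] eventually_conj by blast
  then have "(Phi x (tt n), \<delta>/2) \<in> P" using AB(4) \<open>\<delta>/2 \<in> B\<close> by blast
  moreover have "(x, tt n) \<in> P" using assms(1,2) by simp
  ultimately have "(x, tt n + \<delta>/2) \<in> P" using domain_concat by blast
  then show False
    using assms(1)[of "tt n + \<delta>/2"] assms(2)[of n] \<open>\<omega> - \<delta>/2 < tt n\<close> \<open>\<delta> > 0\<close> by auto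
qed

lemma escape_leaves_compact:
  assumes "0 < \<omega>" "\<And>t. 0 \<le> t \<Longrightarrow> (x,t) \<in> P \<longleftrightarrow> t < \<omega>"
    and "compact C" "C \<subseteq> D"
  shows "\<exists>t\<in>{0..<\<omega>}. Phi x t \<notin> C"
proof (rule ccontr)
  assume "\<not> ?thesis"
  then have in_C: "Phi x t \<in> C" if "t \<in> {0..<\<omega>}" for t using that by blast
  obtain tt where tt: "\<And>n. tt n \<in> {0..<\<omega>}" "tt \<longlonglongrightarrow> \<omega>"
    using LIMSEQ_from_below[OF assms(1)] by blast
  obtain l r where "l \<in> C" "strict_mono r" "((\<lambda>n. Phi x (tt n)) \<circ> r) \<longlonglongrightarrow> l"
    using assms(3)[unfolded compact_def] in_C[OF tt(1)] by meson
  moreover have "(tt \<circ> r) \<longlonglongrightarrow> \<omega>" using LIMSEQ_subseq_LIMSEQ[OF tt(2)] \<open>strict_mono r\<close> .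
  ultimately show False
    using escape_no_limit[OF assms(2), of "tt \<circ> r" l] tt(1) assms(4) by (auto simp: comp_def)
qed

lemma lyapunov_trapping_set:
  assumes "global_lyapunov D Phi P k" "x \<in> D"
  obtains B where "closed B" "bounded_in D B" "x \<in> B" "\<And>t. 0 \<le> t \<Longrightarrow> (x,t) \<in> P \<Longrightarrow> Phi x t \<in> B"
proof -
  define B where "B = {z\<in>D. k z \<le> k x + 1}"
  have "0 \<le> k x" using assms by (simp add: global_lyapunov_def)
  then have "bounded_in D B"
    using assms(1) unfolding global_lyapunov_def coercive_on_def B_def by simp
  then have "closed (closure B)" "bounded_in D (closure B)"
    by (auto simp: bounded_in_def bounded_closure)
  moreover have "Phi x t \<in> B" if "0 \<le> t" "(x,t) \<in> P" for t
  proof -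
    have "k (Phi x t) \<le> k (Phi x 0)"
      using assms domain_zero that unfolding global_lyapunov_def by blast
    then show ?thesis using assms(2) Phi_in_D[OF that(2)] by (simp add: B_def)
  qed
  moreover have "x \<in> B" using assms(2) by (simp add: B_def)
  ultimately show ?thesis using that closure_subset[of B] by blast
qed

lemma forward_complete_if_no_trapped_escape:
  assumes "global_lyapunov D Phi P k" "x \<in> D" "0 \<le> T"
    and no_escape: "\<And>\<omega> B. 0 < \<omega> \<Longrightarrow> (\<And>t. 0 \<le> t \<Longrightarrow> (x,t) \<in> P \<longleftrightarrow> t < \<omega>) \<Longrightarrow>
      closed B \<Longrightarrow> bounded_in D B \<Longrightarrow> x \<in> B \<Longrightarrow> (\<And>t. t \<in> {0..<\<omega>} \<Longrightarrow> Phi x t \<in> B) \<Longrightarrow> False"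
  shows "(x,T) \<in> P"
proof (rule ccontr)
  assume "(x,T) \<notin> P"
  then obtain \<omega> where \<omega>: "0 < \<omega>" "\<And>t. 0 \<le> t \<Longrightarrow> (x,t) \<in> P \<longleftrightarrow> t < \<omega>"
    using escape_time assms(2,3) by blast
  obtain B where B: "closed B" "bounded_in D B" "x \<in> B"
    and trapped: "\<And>t. 0 \<le> t \<Longrightarrow> (x,t) \<in> P \<Longrightarrow> Phi x t \<in> B"
    using lyapunov_trapping_set[OF assms(1,2)] by blast
  have "Phi x t \<in> B" if "t \<in> {0..<\<omega>}" for t using trapped \<omega>(2) that by simp
  then show False using no_escape[OF \<omega> B] by blast
qed

lemma forward_complete_cond_c:
  assumes "cond_c D Phi P" "global_lyapunov D Phi P k" "x \<in> D" "0 \<le> T"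
  shows "(x,T) \<in> P"
proof -
  obtain B where "closed B" "bounded_in D B" "x \<in> B" "\<And>t. 0 \<le> t \<Longrightarrow> (x,t) \<in> P \<Longrightarrow> Phi x t \<in> B"
    using lyapunov_trapping_set[OF assms(2,3)] by blast
  then have "{x} \<times> {0..} \<subseteq> P" using assms(1) unfolding cond_c_def by simp
  then show ?thesis using assms(4) by auto
qed

lemma forward_complete_cond_a1:
  assumes "cond_a1 D f" "global_lyapunov D Phi P k" "x \<in> D" "0 \<le> T"
  shows "(x,T) \<in> P"
  using assms(2-4)
proof (rule forward_complete_if_no_trapped_escape)
  fix \<omega> B assume \<omega>: "0 < \<omega>" "\<And>t. 0 \<le> t \<Longrightarrow> (x,t) \<in> P \<longleftrightarrow> t < \<omega>"
    and B: "closed B" "bounded_in D B" "\<And>t. t \<in> {0..<\<omega>} \<Longrightarrow> Phi x t \<in> B"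
  define C where "C = B \<inter> f -` closed_segment y0 (f x)"
  have "compact C"
    using assms(1) B(1,2) compact_segment unfolding cond_a1_def proper_on_def C_def by blast
  moreover have "C \<subseteq> D" using closed_bounded_in_subset[OF B(1,2)] by (auto simp: C_def)
  moreover have "Phi x t \<in> C" if "t \<in> {0..<\<omega>}" for t
    using B(3)[OF that] f_Phi_in_closed_segment \<omega>(2) that by (simp add: C_def)
  ultimately show False using escape_leaves_compact[OF \<omega>] by blast
qed

lemma forward_complete_cond_b:
  assumes "cond_b D f x0" "global_lyapunov D Phi P k" "x \<in> D" "0 \<le> T"
  shows "(x,T) \<in> P"
  using assms(2-4)
proof (rule forward_complete_if_no_trapped_escape)
  fix \<omega> B assume \<omega>: "0 < \<omega>" "\<And>t. 0 \<le> t \<Longrightarrow> (x,t) \<in> P \<longleftrightarrow> t < \<omega>"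
    and B: "closed B" "bounded_in D B" "x \<in> B" "\<And>t. t \<in> {0..<\<omega>} \<Longrightarrow> Phi x t \<in> B"
  define Z where "Z = {z\<in>D. f z \<in> closed_segment y0 (f x)} \<inter> B"
  define C where "C = connected_component_set Z x"
  have "x \<in> Z" using assms(3) B(3) by (simp add: Z_def)
  then have "C \<in> components Z" by (auto simp: components_def C_def)
  then have "compact C" using assms(1) B(1,2,3) unfolding cond_b_def Z_def by blast
  moreover have "C \<subseteq> D" using connected_component_subset[of Z x] by (auto simp: C_def Z_def)
  moreover have "Phi x ` {0..<\<omega>} \<subseteq> C"
    unfolding C_def
  proof (rule connected_component_maximal)
    show "x \<in> Phi x ` {0..<\<omega>}" using \<omega>(1) assms(3) by (auto intro: image_eqI[of _ _ 0])
    show "connected (Phi x ` {0..<\<omega>})"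
      using \<omega>(2) by (intro connected_continuous_image continuous_on_trajectory) auto
    show "Phi x ` {0..<\<omega>} \<subseteq> Z"
      using B(4) \<omega>(2) Phi_in_D f_Phi_in_closed_segment by (auto simp: Z_def)
  qed
  ultimately show False using escape_leaves_compact[OF \<omega>] by blast
qed

lemma trajectory_has_derivative_local_inverse:
  assumes "(x,t) \<in> P" "open U" "Phi x t \<in> U" "\<And>z. z \<in> U \<Longrightarrow> g (f z) = z"
    and "(g has_derivative G) (at (f (Phi x t)))"
  shows "(Phi x has_derivative (\<lambda>h. G (h *\<^sub>R (- exp (-t) *\<^sub>R (f x - y0))))) (at t)"
proof -
  define E where "E = {s. (x,s) \<in> P} \<inter> Phi x -` U"
  have "((\<lambda>s. g (Psi y0 (f x) s)) has_derivative (\<lambda>h. G (h *\<^sub>R (- exp (-t) *\<^sub>R (f x - y0))))) (at t)"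
    using has_derivative_compose[OF Psi_has_derivative assms(5)[unfolded f_Phi[OF assms(1)]]] .
  moreover have "open E"
    unfolding E_def
    by (rule continuous_open_preimage[OF continuous_on_trajectory open_time_slice assms(2)]) simp
  moreover have "t \<in> E" using assms(1,3) by (simp add: E_def)
  moreover have "g (Psi y0 (f x) s) = Phi x s" if "s \<in> E" for s
    using that f_Phi assms(4) by (fastforce simp: E_def)
  ultimately show ?thesis by (rule has_derivative_transform_within_open)
qed

lemma trajectory_derivative_cond_a2:
  assumes "local_C1_diffeo D f f'" "(x,t) \<in> P" "0 \<le> t" "f' (Phi x t) o\<^sub>L L = id_blinfun"
  shows "(Phi x has_derivative (\<lambda>h. L (h *\<^sub>R (- exp (-t) *\<^sub>R (f x - y0))))) (at t)"
    and "onorm (\<lambda>h. L (h *\<^sub>R (- exp (-t) *\<^sub>R (f x - y0)))) \<le> norm L * norm (f x - y0)"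
proof -
  define q where "q = Phi x t"
  have "q \<in> D" using Phi_in_D[OF assms(2)] by (simp add: q_def)
  then obtain U g g' where U: "open U" "q \<in> U" "homeomorphism U (f ` U) f g" "C1_on (f ` U) g g'"
    using assms(1) unfolding local_C1_diffeo_def by blast
  have gf: "g (f z) = z" if "z \<in> U" for z using homeomorphism_apply1[OF U(3) that] .
  have g_deriv: "(g has_derivative blinfun_apply (g' (f q))) (at (f q))"
    using U(2,4) unfolding C1_on_def by blast
  moreover have "(f has_derivative blinfun_apply (f' q)) (at q)"
    using assms(1) \<open>q \<in> D\<close> unfolding local_C1_diffeo_def C1_on_def by blast
  ultimately have "g' (f q) = L"
    using inverse_derivative_eq[of U q g f "f' q" "g' (f q)" L, OF U(1,2) gf] assms(4)
    by (simp add: q_def)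
  then show "(Phi x has_derivative (\<lambda>h. L (h *\<^sub>R (- exp (-t) *\<^sub>R (f x - y0))))) (at t)"
    using trajectory_has_derivative_local_inverse[OF assms(2) U(1) _ gf] U(2) g_deriv
    by (simp add: q_def)
  define w where "w = - exp (-t) *\<^sub>R (f x - y0)"
  have w: "norm w \<le> norm (f x - y0)"
    using assms(3) by (simp add: w_def mult_left_le_one_le)
  have "norm (L (h *\<^sub>R w)) \<le> norm L * norm (f x - y0) * norm h" for h
  proof -
    have "norm (L (h *\<^sub>R w)) \<le> norm L * norm (h *\<^sub>R w)" by (rule norm_blinfun)
    also have "\<dots> = norm L * norm w * norm h" by simp
    also have "\<dots> \<le> norm L * norm (f x - y0) * norm h"
      using w by (intro mult_right_mono mult_left_mono) auto
    finally show ?thesis .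
  qed
  then show "onorm (\<lambda>h. L (h *\<^sub>R (- exp (-t) *\<^sub>R (f x - y0)))) \<le> norm L * norm (f x - y0)"
    unfolding w_def[symmetric] by (intro onorm_bound) simp_all
qed

lemma trajectory_lipschitz_cond_a2:
  assumes "cond_a2 D f" "closed B" "bounded_in D B"
    and "\<And>t. t \<in> {0..<\<omega>} \<Longrightarrow> (x,t) \<in> P \<and> Phi x t \<in> B"
  obtains C where "C-lipschitz_on {0..<\<omega>} (Phi x)"
proof -
  obtain f' where C1: "local_C1_diffeo D f f'" and inverse_bounds: "\<forall>B. closed B \<and> bounded_in D B \<longrightarrow>
      (\<exists>M. \<forall>z\<in>B. \<exists>L. L o\<^sub>L f' z = id_blinfun \<and> f' z o\<^sub>L L = id_blinfun \<and> norm L \<le> M)"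
    using assms(1) unfolding cond_a2_def by blast
  obtain M where M: "\<forall>z\<in>B. \<exists>L. L o\<^sub>L f' z = id_blinfun \<and> f' z o\<^sub>L L = id_blinfun \<and> norm L \<le> M"
    using inverse_bounds assms(2,3) by blast
  define C where "C = max M 0 * norm (f x - y0)"
  have "\<exists>D'. (Phi x has_derivative D') (at t) \<and> onorm D' \<le> C" if t: "t \<in> {0..<\<omega>}" for t
  proof -
    obtain L where L: "f' (Phi x t) o\<^sub>L L = id_blinfun" "norm L \<le> M"
      using M assms(4)[OF t] by blast
    have "(x,t) \<in> P" "0 \<le> t" using assms(4)[OF t] t by auto
    note deriv = trajectory_derivative_cond_a2[OF C1 this L(1)]
    have "norm L * norm (f x - y0) \<le> C"
      using L(2) by (simp add: C_def mult_right_mono)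
    then show ?thesis using deriv by fastforce
  qed
  then obtain Dr where Dr: "\<And>t. t \<in> {0..<\<omega>} \<Longrightarrow> (Phi x has_derivative Dr t) (at t) \<and> onorm (Dr t) \<le> C"
    by metis
  have "C-lipschitz_on {0..<\<omega>} (Phi x)"
    by (rule bounded_derivative_imp_lipschitz[where f' = Dr])
      (use Dr in \<open>auto intro: has_derivative_at_withinI simp: C_def\<close>)
  then show ?thesis by (rule that)
qed

text \<open>Bounded inverse derivatives make a trapped trajectory Lipschitz in time, so it converges
  at a finite escape time, to a point of the closed set \<open>B \<subseteq> D\<close>.\<close>

lemma forward_complete_cond_a2:
  assumes "cond_a2 D f" "global_lyapunov D Phi P k" "x \<in> D" "0 \<le> T"
  shows "(x,T) \<in> P"
  using assms(2-4)
proof (rule forward_complete_if_no_trapped_escape)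
  fix \<omega> B assume \<omega>: "0 < \<omega>" "\<And>t. 0 \<le> t \<Longrightarrow> (x,t) \<in> P \<longleftrightarrow> t < \<omega>"
    and B: "closed B" "bounded_in D B" "\<And>t. t \<in> {0..<\<omega>} \<Longrightarrow> Phi x t \<in> B"
  have "(x,t) \<in> P \<and> Phi x t \<in> B" if "t \<in> {0..<\<omega>}" for t using \<omega>(2) B(3) that by auto
  then obtain C where C: "C-lipschitz_on {0..<\<omega>} (Phi x)"
    using trajectory_lipschitz_cond_a2[OF assms(1) B(1,2)] by blast
  obtain tt where tt: "\<And>n. tt n \<in> {0..<\<omega>}" "tt \<longlonglongrightarrow> \<omega>"
    using LIMSEQ_from_below[OF \<omega>(1)] by blast
  have "Cauchy (\<lambda>n. Phi x (tt n))"
    using uniformly_continuous_on_Cauchy[OF lipschitz_on_uniformly_continuous[OF C]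
        LIMSEQ_imp_Cauchy[OF tt(2)] tt(1)] .
  then obtain p where p: "(\<lambda>n. Phi x (tt n)) \<longlonglongrightarrow> p"
    using Cauchy_convergent_iff convergent_def by blast
  have "p \<in> B" using closed_sequentially[OF B(1) _ p] B(3) tt(1) by blast
  then show False
    using escape_no_limit[OF \<omega>(2) tt p] closed_bounded_in_subset[OF B(1,2)] by blast
qed

lemma chart_at_x0:
  obtains r U g where "0 < r" "open U" "U \<subseteq> D" "x0 \<in> U" "homeomorphism U (ball y0 r) f g"
proof -
  obtain U0 g where U0: "open U0" "x0 \<in> U0" "U0 \<subseteq> D" "open (f ` U0)"
    and hom: "homeomorphism U0 (f ` U0) f g"
    using bspec[OF local_homeo[unfolded local_homeo_def] x0_in_D] by blast
  obtain r where r: "0 < r" "ball y0 r \<subseteq> f ` U0"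
    using U0(2,4) open_contains_ball by blast
  define U where "U = U0 \<inter> f -` ball y0 r"
  have "open U"
    unfolding U_def using continuous_open_preimage[OF homeomorphism_cont1[OF hom] U0(1)] by simp
  moreover have "f ` U = ball y0 r"
  proof
    show "f ` U \<subseteq> ball y0 r" by (auto simp: U_def)
    show "ball y0 r \<subseteq> f ` U"
    proof
      fix y assume y: "y \<in> ball y0 r"
      then have "y \<in> f ` U0" using r(2) by blast
      then have "g y \<in> U0" "f (g y) = y"
        using homeomorphism_image2[OF hom] homeomorphism_apply2[OF hom] by auto
      then show "y \<in> f ` U" using y unfolding U_def by (metis IntI image_eqI vimageI)
    qed
  qed
  then have "homeomorphism U (ball y0 r) f g"
    using homeomorphism_of_subsets[OF hom _ r(2)] by (simp add: U_def)
  moreover have "U \<subseteq> D" "x0 \<in> U" using U0(2,3) r(1) by (auto simp: U_def)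
  ultimately show ?thesis using that r(1) by blast
qed

end

section \<open>Forward complete auxiliary flows\<close>

locale forward_complete_flow = aux_flow +
  assumes forward_complete: "x \<in> D \<Longrightarrow> 0 \<le> t \<Longrightarrow> (x,t) \<in> P"
begin

lemma star_shaped_image:
  assumes "y \<in> f ` D" shows "closed_segment y0 y \<subseteq> f ` D"
proof
  fix z assume "z \<in> closed_segment y0 y"
  then obtain u where u: "0 \<le> u" "u \<le> 1" "z = (1 - u) *\<^sub>R y0 + u *\<^sub>R y"
    unfolding closed_segment_def by blast
  obtain x where x: "x \<in> D" "y = f x" using assms by blast
  show "z \<in> f ` D"
  proof (cases "u = 0")
    case True
    then show ?thesis using u x0_in_D by simp
  next
    case False
    then have "0 < u" using u(1) by simp
    then have "0 \<le> - ln u" "exp (- (- ln u)) = u" using u(2) by auto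
    then have xt: "(x, - ln u) \<in> P" and "Psi y0 y (- ln u) = z"
      using forward_complete[OF x(1)] u(3) by (auto simp: Psi_def algebra_simps)
    then have "f (Phi x (- ln u)) = z" using f_Phi[OF xt] x(2) by simp
    then show ?thesis using Phi_in_D[OF xt] by blast
  qed
qed

lemma continuous_on_Phi_at:
  assumes "0 \<le> t" shows "continuous_on D (\<lambda>z. Phi z t)"
proof -
  have "continuous_on D (\<lambda>z. (\<lambda>(x,t). Phi x t) (z, t))"
    by (rule continuous_on_compose2[OF continuous_on_Phi])
      (use forward_complete assms in \<open>auto intro!: continuous_intros\<close>)
  then show ?thesis by simp
qed

end

locale chart_flow = forward_complete_flow +
  fixes r :: real and U :: "'a set" and g :: "'b \<Rightarrow> 'a"
  assumes r_pos: "0 < r" and open_U: "open U" and U_subset_D: "U \<subseteq> D" and x0_in_U: "x0 \<in> U"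
    and chart: "homeomorphism U (ball y0 r) f g"
begin

lemma g_f: "z \<in> U \<Longrightarrow> g (f z) = z"
  and f_g: "y \<in> ball y0 r \<Longrightarrow> f (g y) = y"
  and g_in_U: "y \<in> ball y0 r \<Longrightarrow> g y \<in> U"
  and f_in_ball: "z \<in> U \<Longrightarrow> f z \<in> ball y0 r"
  using chart by (auto simp: homeomorphism_def)

text \<open>Inside the chart the flow is conjugate to \<open>Psi\<close>, which leaves the ball invariant.\<close>

lemma Phi_chart:
  assumes "w \<in> U" "0 \<le> t" shows "Phi w t = g (Psi y0 (f w) t)"
proof (rule local_homeo_lift_unique[OF local_homeo, of "{0..t}" "Phi w" _ 0])
  have w: "w \<in> D" "f w \<in> ball y0 r" using assms(1) U_subset_D f_in_ball by auto
  then have Psi_ball: "Psi y0 (f w) u \<in> ball y0 r" if "u \<in> {0..t}" for u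
    using Psi_in_ball[OF w(2)] that by simp
  show "continuous_on {0..t} (Phi w)"
    by (rule continuous_on_trajectory) (use forward_complete w in auto)
  have "continuous_on {0..t} (Psi y0 (f w))" unfolding Psi_def by (intro continuous_intros)
  then show "continuous_on {0..t} (\<lambda>u. g (Psi y0 (f w) u))"
    by (rule continuous_on_compose2[OF homeomorphism_cont2[OF chart]]) (use Psi_ball in auto)
  show "Phi w ` {0..t} \<subseteq> D" using forward_complete Phi_in_D w by auto
  show "(\<lambda>u. g (Psi y0 (f w) u)) ` {0..t} \<subseteq> D" using Psi_ball g_in_U U_subset_D by blast
  show "\<And>u. u \<in> {0..t} \<Longrightarrow> f (Phi w u) = f (g (Psi y0 (f w) u))"
    using f_Phi forward_complete w Psi_ball f_g by simp
  show "Phi w 0 = g (Psi y0 (f w) 0)" using w g_f assms(1) by simp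
qed (use assms in auto)

definition basin :: "'a set" where
  "basin = {x\<in>D. \<exists>t\<ge>0. Phi x t \<in> U}"

lemma x0_in_basin: "x0 \<in> basin"
  using x0_in_D x0_in_U by (auto simp: basin_def intro!: exI[of _ 0])

lemma basin_forward:
  assumes "z \<in> basin" "0 \<le> T" shows "Phi z T \<in> basin"
proof -
  obtain t where t: "0 \<le> t" "Phi z t \<in> U" and z: "z \<in> D" using assms(1) by (auto simp: basin_def)
  have zT: "(z,T) \<in> P" "(z,t) \<in> P" using forward_complete z t(1) assms(2) by auto
  have "Phi (Phi z T) (max (t - T) 0) \<in> U"
  proof (cases "t \<le> T")
    case True
    have "Phi (Phi z t) (T - t) = Phi z T" using Phi_add[OF zT(2), of "T - t"] zT(1) by simp
    moreover have "Phi (Phi z t) (T - t) \<in> U"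
      using Phi_chart[OF t(2)] True g_in_U[OF Psi_in_ball[OF f_in_ball[OF t(2)]]] by simp
    ultimately show ?thesis using True Phi_in_D[OF zT(1)] by simp
  next
    case False
    have "Phi (Phi z T) (t - T) = Phi z t" using Phi_add[OF zT(1), of "t - T"] zT(2) by simp
    then show ?thesis using t(2) False by simp
  qed
  then show ?thesis using Phi_in_D[OF zT(1)] by (auto simp: basin_def intro!: exI[of _ "max (t - T) 0"])
qed

lemma basin_in_chart:
  assumes "u \<in> basin" "f u \<in> ball y0 r" shows "u \<in> U"
proof -
  obtain t where t: "0 \<le> t" "Phi u t \<in> U" and u: "u \<in> D" using assms(1) by (auto simp: basin_def)
  define u' where "u' = g (f u)"
  have u': "u' \<in> U" "f u' = f u" using assms(2) g_in_U f_g by (auto simp: u'_def)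
  have "Phi u t = g (f (Phi u t))" using g_f t(2) by simp
  also have "\<dots> = g (Psi y0 (f u) t)" using f_Phi forward_complete u t(1) by simp
  also have "\<dots> = Phi u' t" using Phi_chart[OF u'(1) t(1)] u'(2) by simp
  finally have "u = u'"
    using Phi_inj[OF forward_complete[OF u t(1)] forward_complete[OF _ t(1)]] u'(1) U_subset_D
    by blast
  then show ?thesis using u'(1) by simp
qed

text \<open>Once the flow has carried \<open>f z\<close> into the ball, membership in the basin becomes the
  closed condition that the flow agrees with its chart expression.\<close>

lemma basin_iff_chart_eq:
  assumes "z \<in> D" "0 \<le> T" "Psi y0 (f z) T \<in> ball y0 r"
  shows "z \<in> basin \<longleftrightarrow> Phi z T = g (Psi y0 (f z) T)"
proof
  have f_PhiT: "f (Phi z T) = Psi y0 (f z) T" using f_Phi forward_complete assms(1,2) by simp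
  assume "z \<in> basin"
  then have "Phi z T \<in> U" using basin_in_chart basin_forward assms(2,3) f_PhiT by simp
  then have "Phi z T = g (f (Phi z T))" using g_f by simp
  then show "Phi z T = g (Psi y0 (f z) T)" using f_PhiT by simp
next
  assume "Phi z T = g (Psi y0 (f z) T)"
  then have "Phi z T \<in> U" using g_in_U assms(3) by simp
  then show "z \<in> basin" using assms(1,2) by (auto simp: basin_def)
qed

lemma open_basin: "open basin"
proof (subst open_subopen, intro ballI)
  fix x assume "x \<in> basin"
  then obtain t where t: "0 \<le> t" "Phi x t \<in> U" and x: "x \<in> D" by (auto simp: basin_def)
  define N where "N = D \<inter> (\<lambda>z. Phi z t) -` U"
  have "open N" unfolding N_def by (rule continuous_open_preimage[OF continuous_on_Phi_at[OF t(1)] open_D open_U])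
  moreover have "x \<in> N" "N \<subseteq> basin" using t x by (auto simp: N_def basin_def)
  ultimately show "\<exists>T. open T \<and> x \<in> T \<and> T \<subseteq> basin" by blast
qed

lemma open_complement_basin: "open (D - basin)"
proof (subst open_subopen, intro ballI)
  fix x assume x: "x \<in> D - basin"
  obtain T where T: "0 \<le> T" "Psi y0 (f x) T \<in> ball y0 r"
    using Psi_eventually_in_ball[OF r_pos] by blast
  have cont_Psi: "continuous_on D (\<lambda>z. Psi y0 (f z) T)"
    unfolding Psi_def by (intro continuous_intros continuous_on_f)
  define W where "W = D \<inter> (\<lambda>z. Psi y0 (f z) T) -` ball y0 r"
  have "open W" unfolding W_def by (rule continuous_open_preimage[OF cont_Psi open_D open_ball])
  define h where "h z = dist (Phi z T) (g (Psi y0 (f z) T))" for z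
  have "continuous_on W h"
    unfolding h_def
  proof (intro continuous_on_dist)
    show "continuous_on W (\<lambda>z. Phi z T)"
      using continuous_on_Phi_at[OF T(1)] by (rule continuous_on_subset) (auto simp: W_def)
    show "continuous_on W (\<lambda>z. g (Psi y0 (f z) T))"
      by (rule continuous_on_compose2[OF homeomorphism_cont2[OF chart] continuous_on_subset[OF cont_Psi]])
        (auto simp: W_def)
  qed
  then have "open (W \<inter> h -` {0<..})"
    using continuous_open_preimage[OF _ \<open>open W\<close> open_greaterThan] by blast
  moreover have "z \<notin> basin \<longleftrightarrow> 0 < h z" if "z \<in> W" for z
    using basin_iff_chart_eq[of z T] that T(1) by (simp add: W_def h_def)
  then have "W \<inter> h -` {0<..} = W - basin" by blast
  ultimately have "open (W - basin)" by simp
  moreover have "x \<in> W - basin" "W - basin \<subseteq> D - basin" using x T by (auto simp: W_def)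
  ultimately show "\<exists>S. open S \<and> x \<in> S \<and> S \<subseteq> D - basin" by blast
qed

lemma basin_eq_D:
  assumes "connected D" shows "basin = D"
proof -
  have "basin \<inter> D = {} \<or> (D - basin) \<inter> D = {}"
    by (rule connectedD[OF assms open_basin open_complement_basin]) auto
  then show ?thesis using x0_in_basin x0_in_D by (auto simp: basin_def)
qed

text \<open>Points with the same image are carried by the flow into the chart at a common time,
  where they have the same image, hence coincide; the flow is injective in the point.\<close>

lemma inj_on_f:
  assumes "connected D" shows "inj_on f D"
proof (rule inj_onI)
  fix x1 x2 assume x: "x1 \<in> D" "x2 \<in> D" "f x1 = f x2"
  obtain T where T: "0 \<le> T" "Psi y0 (f x1) T \<in> ball y0 r"
    using Psi_eventually_in_ball[OF r_pos] by blast
  have "x1 \<in> basin" "x2 \<in> basin" using basin_eq_D[OF assms] x by auto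
  then have "Phi x1 T = Phi x2 T"
    using basin_iff_chart_eq[OF x(1) T] basin_iff_chart_eq[OF x(2) T[unfolded x(3)]] x(3) by simp
  then show "x1 = x2" by (rule Phi_inj[OF forward_complete[OF x(1) T(1)] forward_complete[OF x(2) T(1)]])
qed

end

theorem proposition2p3:
  fixes D :: "'a::banach set" and f :: "'a \<Rightarrow> 'b::banach" and x0 :: 'a
    and Phi :: "'a \<Rightarrow> real \<Rightarrow> 'a" and DPhi :: "('a \<times> real) set"
  assumes "open D" and "connected D" and "x0 \<in> D"
    and "local_homeo D f"
    and "auxiliary_flow D f x0 Phi DPhi"
    and "\<exists>k. global_lyapunov D Phi DPhi k"
    and "cond_a1 D f \<or> cond_a2 D f \<or> cond_b D f x0 \<or> cond_c D Phi DPhi"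
  shows "inj_on f D \<and> (\<forall>y\<in>f ` D. closed_segment (f x0) y \<subseteq> f ` D)"
proof -
  interpret aux_flow D f x0 Phi DPhi
    using assms(1,3,4,5) by unfold_locales
  obtain k where k: "global_lyapunov D Phi DPhi k" using assms(6) by blast
  have "(x,t) \<in> DPhi" if "x \<in> D" "0 \<le> t" for x t
    using assms(7) forward_complete_cond_a1[OF _ k that] forward_complete_cond_a2[OF _ k that]
      forward_complete_cond_b[OF _ k that] forward_complete_cond_c[OF _ k that] by blast
  then interpret forward_complete_flow D f x0 Phi DPhi
    by unfold_locales
  obtain r U g where "0 < r" "open U" "U \<subseteq> D" "x0 \<in> U" "homeomorphism U (ball (f x0) r) f g"
    using chart_at_x0 by blast
  then interpret chart_flow D f x0 Phi DPhi r U g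
    by unfold_locales
  show ?thesis using inj_on_f[OF assms(2)] star_shaped_image by blast
qed

end
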